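(* For all $n\ge0$, $$F_n(x,y,q)F_{n+1}(x,y,q)=\sum_{j=0}^nxy^jq^{\lfloor j^2/2\rfloor}F_{n-j}(xq^j,yq^j,q)F_{n-j}(xq^{j+1},yq^{j+1},q).$$
   Context: $\Pi_n(13/2,123)$ is the set of layered matchings of $[n]$: set partitions whose blocks are consecutive intervals $[1,i_1]/\dots/[i_{k-1}+1,n]$, each of size $1$ or $2$. $\Pi_0(13/2,123)$ consists of the empty partition. For $\pi=B_1/\dots/B_k$ with $\min B_1<\dots<\min B_k$, $rb(\pi)$ is the number of pairs $(b,B_j)$ with $b\in B_i$, $j>i$, $\max B_j>b$. Let $s(\pi)$ and $d(\pi)$ be the numbers of blocks of size $1$ and $2$. Define $F_n(x,y,q)=\sum_{\pi\in\Pi_n(13/2,123)}x^{s(\pi)}y^{d(\pi)}q^{rb(\pi)}$, so $F_0=1$ and $F_1=x$. $F_n(xq^a,yq^a,q)$ denotes the substitution $x\mapsto xq^a$, $y\mapsto yq^a$. *)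

theory Defs
  imports Main "HOL-Library.Disjoint_Sets"
begin

definition layered_matchings :: "nat \<Rightarrow> nat set set set" where
  "layered_matchings n = {P. partition_on {1..n} P \<and>
      (\<forall>B\<in>P. \<exists>a. B = {a} \<or> B = {a, Suc a})}"

definition rb :: "nat set set \<Rightarrow> nat" where
  "rb P = card {(b, C). \<exists>B\<in>P. b \<in> B \<and> C \<in> P \<and> Min B < Min C \<and> b < Max C}"

definition singles :: "nat set set \<Rightarrow> nat" where
  "singles P = card {B\<in>P. card B = 1}"

definition doubles :: "nat set set \<Rightarrow> nat" where
  "doubles P = card {B\<in>P. card B = 2}"

definition F :: "nat \<Rightarrow> 'a::comm_ring_1 \<Rightarrow> 'a \<Rightarrow> 'a \<Rightarrow> 'a" where
  "F n x y q = (\<Sum>P\<in>layered_matchings n. x ^ singles P * y ^ doubles P * q ^ rb P)"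

end

theory Submission
  imports Defs
begin

(* Removing the block containing the smallest point splits a layered
   matching into a first block {1} or {1,2} followed by a layered matching of the
   remaining interval.  Every pair (b, C) counted by rb with b in the first block
   is present, so a first block of size c contributes q^(c * #blocks of the rest);
   since #blocks = singles + doubles this amounts to the substitution
   x -> x q^c, y -> y q^c.  Hence F satisfies the three-term recursion
     F_0 = 1,  F_1 = x,  F_(n+2)(x,y) = x F_(n+1)(xq,yq) + y F_n(xq^2,yq^2),
   which is captured by the function Fr below. *)

section \<open>The three-term recursion and the product identity\<close>

fun Fr :: "nat \<Rightarrow> 'a::comm_ring_1 \<Rightarrow> 'a \<Rightarrow> 'a \<Rightarrow> 'a" where
  "Fr 0 x y q = 1"
| "Fr (Suc 0) x y q = x"
| "Fr (Suc (Suc n)) x y q = x * Fr (Suc n) (x*q) (y*q) q + y * Fr n (x*q^2) (y*q^2) q"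

definition summand :: "nat \<Rightarrow> nat \<Rightarrow> 'a::comm_ring_1 \<Rightarrow> 'a \<Rightarrow> 'a \<Rightarrow> 'a" where
  "summand n j x y q = x * y ^ j * q ^ (j ^ 2 div 2)
     * Fr (n - j) (x * q ^ j) (y * q ^ j) q
     * Fr (n - j) (x * q ^ (j + 1)) (y * q ^ (j + 1)) q"

lemma square_div_two_shift: "(j + 2) ^ 2 div 2 = (j::nat) ^ 2 div 2 + 2 * j + 2"
proof -
  have "(j + 2) ^ 2 = j ^ 2 + 2 * (2 * j + 2)" by (simp add: power2_eq_square algebra_simps)
  then show ?thesis by simp
qed

lemma summand_shift:
  "summand (n + 2) (j + 2) x y q = y ^ 2 * summand n j (x * q ^ 2) (y * q ^ 2) q"
proof -
  have pow: "z * q ^ (j + 2) = z * q ^ 2 * q ^ j" "z * q ^ (j + 2 + 1) = z * q ^ 2 * q ^ (j + 1)"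
    for z :: 'a by (simp_all add: power_add power2_eq_square algebra_simps)
  show ?thesis
    unfolding summand_def pow square_div_two_shift
    by (simp add: power_add power_mult algebra_simps power2_eq_square)
qed

text \<open>Expanding the recursion twice: the product for n + 2 is the j = 0 and j = 1 summands
  plus y^2 times the product for n at (x q^2, y q^2).\<close>
lemma Fr_product_expand:
  "Fr (n + 2) x y q * Fr (n + 3) x y q =
     summand (n + 2) 0 x y q + summand (n + 2) 1 x y q
     + y ^ 2 * (Fr n (x*q^2) (y*q^2) q * Fr (n + 1) (x*q^2) (y*q^2) q)"
  by (simp add: summand_def numeral_eq_Suc algebra_simps power2_eq_square)

lemma Fr_product_identity:
  "Fr n x y q * Fr (n + 1) x y q = (\<Sum>j = 0..n. summand n j x y q)"
proof (induction n arbitrary: x y rule: less_induct)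
  case (less n)
  consider "n = 0" | "n = 1" | m where "n = m + 2"
    by (metis One_nat_def add_2_eq_Suc' not0_implies_Suc)
  then show ?case
  proof cases
    case 1 then show ?thesis by (simp add: summand_def)
  next
    case 2 then show ?thesis by (simp add: summand_def algebra_simps)
  next
    case 3
    have IH: "Fr m (x*q^2) (y*q^2) q * Fr (m + 1) (x*q^2) (y*q^2) q
        = (\<Sum>j = 0..m. summand m j (x*q^2) (y*q^2) q)"
      using less.IH[of m] 3 by simp
    have peel: "(\<Sum>j = 0..m + 2. summand (m + 2) j x y q)
        = summand (m + 2) 0 x y q + summand (m + 2) 1 x y q
          + (\<Sum>j = 0..m. summand (m + 2) (j + 2) x y q)"
      unfolding add_2_eq_Suc' sum.atLeast0_atMost_Suc_shift by (simp add: add.assoc)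
    show ?thesis
      unfolding 3 peel summand_shift sum_distrib_left[symmetric] IH[symmetric]
      using Fr_product_expand[of m x y q] by (simp add: numeral_eq_Suc)
  qed
qed

section \<open>Layered matchings of a shifted interval\<close>

definition layered_from :: "nat \<Rightarrow> nat \<Rightarrow> nat set set set" where
  "layered_from k n = {P. partition_on {Suc k..k+n} P \<and> (\<forall>B\<in>P. \<exists>a. B = {a} \<or> B = {a, Suc a})}"

definition weight :: "nat set set \<Rightarrow> 'a::comm_ring_1 \<Rightarrow> 'a \<Rightarrow> 'a \<Rightarrow> 'a" where
  "weight P x y q = x ^ singles P * y ^ doubles P * q ^ rb P"

definition F_from :: "nat \<Rightarrow> nat \<Rightarrow> 'a::comm_ring_1 \<Rightarrow> 'a \<Rightarrow> 'a \<Rightarrow> 'a" where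
  "F_from k n x y q = (\<Sum>P\<in>layered_from k n. weight P x y q)"

lemma F_eq_F_from: "F n x y q = F_from 0 n x y q"
  unfolding F_def F_from_def weight_def layered_matchings_def layered_from_def by simp

lemma finite_layered_from: "finite (layered_from k n)"
proof -
  have "layered_from k n \<subseteq> {P. partition_on {Suc k..k+n} P}" unfolding layered_from_def by auto
  then show ?thesis using finitely_many_partition_on[of "{Suc k..k+n}"] finite_subset by auto
qed

lemma finite_matching_blocks: "P \<in> layered_from k n \<Longrightarrow> finite P"
  unfolding layered_from_def using finite_elements by blast

lemma layered_from_block:
  "P \<in> layered_from k n \<Longrightarrow> B \<in> P \<Longrightarrow>
     finite B \<and> B \<noteq> {} \<and> (card B = 1 \<or> card B = 2) \<and> B \<subseteq> {Suc k..k+n}"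
  unfolding layered_from_def partition_on_def by auto

lemma layered_from_empty: "layered_from k 0 = {{}}"
  unfolding layered_from_def by (auto simp: partition_on_empty)

lemma card_eq_singles_plus_doubles:
  assumes P: "P \<in> layered_from k n"
  shows "card P = singles P + doubles P"
proof -
  have "P = {B\<in>P. card B = 1} \<union> {B\<in>P. card B = 2}" using layered_from_block[OF P] by auto
  then have "card P = card ({B\<in>P. card B = 1} \<union> {B\<in>P. card B = 2})" by simp
  also have "\<dots> = singles P + doubles P" unfolding singles_def doubles_def
    by (rule card_Un_disjoint) (use finite_matching_blocks[OF P] in auto)
  finally show ?thesis .
qed

text \<open>Adding a block B0 lying entirely below all other blocks adds exactly the pairs
  B0 \<times> P to the set counted by rb.\<close>
lemma rb_insert_lowest_block:
  assumes fin: "finite P" and B0: "finite B0" "B0 \<noteq> {}"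
    and blocks: "\<And>C. C \<in> P \<Longrightarrow> finite C \<and> C \<noteq> {}"
    and below: "\<And>C b c. C \<in> P \<Longrightarrow> b \<in> B0 \<Longrightarrow> c \<in> C \<Longrightarrow> b < c"
  shows "rb (insert B0 P) = rb P + card B0 * card P"
proof -
  let ?S = "\<lambda>P. {(b, C). \<exists>B\<in>P. b \<in> B \<and> C \<in> P \<and> Min B < Min C \<and> b < Max C}"
  have Min_less: "Min B0 < Min C" and less_Max: "b < Max C" if "C \<in> P" "b \<in> B0" for b C
    using below[OF that(1)] blocks[OF that(1)] B0 that(2) by simp_all
  have eq: "?S (insert B0 P) = ?S P \<union> (B0 \<times> P)"
  proof (rule set_eqI, rule iffI)
    fix z assume "z \<in> ?S (insert B0 P)"
    then obtain b C B where z: "z = (b, C)" and B: "B \<in> insert B0 P" "b \<in> B" "C \<in> insert B0 P"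
      "Min B < Min C" "b < Max C" by blast
    have "C \<noteq> B0"
    proof
      assume "C = B0"
      then have "B \<in> P" using B by auto
      then show False using B \<open>C = B0\<close> Min_less[OF _ Min_in[OF B0]] by fastforce
    qed
    then show "z \<in> ?S P \<union> (B0 \<times> P)" using B z by auto
  next
    fix z assume "z \<in> ?S P \<union> (B0 \<times> P)"
    then show "z \<in> ?S (insert B0 P)" using Min_less less_Max by blast
  qed
  have "finite (?S P)"
    by (rule finite_subset[of _ "(\<Union>P) \<times> P"]) (use fin blocks in auto)
  moreover have "?S P \<inter> (B0 \<times> P) = {}" using below by blast
  ultimately have "card (?S P \<union> (B0 \<times> P)) = card (?S P) + card (B0 \<times> P)"
    using fin B0 by (intro card_Un_disjoint) auto
  then show ?thesis unfolding rb_def eq by (simp add: card_cartesian_product)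
qed

section \<open>Decomposition by the first block\<close>

text \<open>All points of a matching of {k+1..k+n} exceed k, so a lower first block is never
  already present and inserting it is injective.\<close>
lemma layered_from_elem_gt: "P \<in> layered_from k n \<Longrightarrow> B \<in> P \<Longrightarrow> b \<in> B \<Longrightarrow> k < b"
  using layered_from_block by fastforce

lemma inj_on_insert_fresh: "(\<And>P. P \<in> A \<Longrightarrow> B \<notin> P) \<Longrightarrow> inj_on (insert B) A"
  by (rule inj_onI) (metis Diff_insert_absorb)

lemma first_block:
  assumes P: "P \<in> layered_from k (Suc n)"
  shows "{Suc k} \<in> P \<or> (n \<ge> 1 \<and> {Suc k, Suc (Suc k)} \<in> P)"
proof -
  have "Suc k \<in> \<Union>P" using P unfolding layered_from_def partition_on_def by auto
  then obtain B where B: "B \<in> P" "Suc k \<in> B" by blast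
  have sub: "B \<subseteq> {Suc k..k + Suc n}" using layered_from_block[OF P B(1)] by auto
  obtain a where "B = {a} \<or> B = {a, Suc a}" using P B(1) unfolding layered_from_def by auto
  then show ?thesis
  proof
    assume "B = {a}" then show ?thesis using B by auto
  next
    assume Ba: "B = {a, Suc a}"
    then have "a = Suc k" using B sub by auto
    then show ?thesis using sub Ba B by auto
  qed
qed

lemma partition_on_remove_block:
  assumes "partition_on A P" "B \<in> P"
  shows "partition_on (A - B) (P - {B})"
proof -
  have d: "disjnt B (\<Union>(P - {B}))"
    using partition_onD2[OF assms(1)] assms(2) unfolding disjoint_def disjnt_def by blast
  have "partition_on A (insert B (P - {B}))" using assms by (simp add: insert_absorb)
  then show ?thesis unfolding partition_on_insert[OF d] by auto
qed

lemma remove_singleton_block: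
  assumes P: "P \<in> layered_from k (Suc n)" and B: "{Suc k} \<in> P"
  shows "P - {{Suc k}} \<in> layered_from (Suc k) n"
proof -
  have part: "partition_on {Suc k..k + Suc n} P" using P unfolding layered_from_def by simp
  have e: "{Suc k..k + Suc n} - {Suc k} = {Suc (Suc k)..Suc k + n}" by auto
  have "partition_on {Suc (Suc k)..Suc k + n} (P - {{Suc k}})"
    using partition_on_remove_block[OF part B] unfolding e .
  then show ?thesis using P unfolding layered_from_def by auto
qed

lemma remove_pair_block:
  assumes P: "P \<in> layered_from k (Suc (Suc n))" and B: "{Suc k, Suc (Suc k)} \<in> P"
  shows "P - {{Suc k, Suc (Suc k)}} \<in> layered_from (Suc (Suc k)) n"
proof -
  have e: "{Suc k..k + Suc (Suc n)} - {Suc k, Suc (Suc k)} = {Suc (Suc (Suc k))..Suc (Suc k) + n}"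
    by auto
  have part: "partition_on {Suc k..k + Suc (Suc n)} P" using P unfolding layered_from_def by simp
  have "partition_on {Suc (Suc (Suc k))..Suc (Suc k) + n} (P - {{Suc k, Suc (Suc k)}})"
    using partition_on_remove_block[OF part B] unfolding e .
  then show ?thesis using P unfolding layered_from_def by auto
qed

lemma insert_singleton_block:
  assumes P: "P \<in> layered_from (Suc k) n"
  shows "insert {Suc k} P \<in> layered_from k (Suc n)"
proof -
  have U: "\<Union>P = {Suc (Suc k)..Suc k + n}" using P unfolding layered_from_def partition_on_def by auto
  have d: "disjnt {Suc k} (\<Union>P)" unfolding U by (simp add: disjnt_def)
  have e: "{Suc k..k + Suc n} - {Suc k} = {Suc (Suc k)..Suc k + n}" by auto
  have "partition_on {Suc k..k + Suc n} (insert {Suc k} P)"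
    unfolding partition_on_insert[OF d] e using P unfolding layered_from_def by auto
  then show ?thesis using P unfolding layered_from_def by auto
qed

lemma insert_pair_block:
  assumes P: "P \<in> layered_from (Suc (Suc k)) n"
  shows "insert {Suc k, Suc (Suc k)} P \<in> layered_from k (Suc (Suc n))"
proof -
  have U: "\<Union>P = {Suc (Suc (Suc k))..Suc (Suc k) + n}"
    using P unfolding layered_from_def partition_on_def by auto
  have d: "disjnt {Suc k, Suc (Suc k)} (\<Union>P)" unfolding U by (simp add: disjnt_def)
  have e: "{Suc k..k + Suc (Suc n)} - {Suc k, Suc (Suc k)} = {Suc (Suc (Suc k))..Suc (Suc k) + n}"
    by auto
  have "partition_on {Suc k..k + Suc (Suc n)} (insert {Suc k, Suc (Suc k)} P)"
    unfolding partition_on_insert[OF d] e using P unfolding layered_from_def by auto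
  then show ?thesis using P unfolding layered_from_def by blast
qed

lemma layered_from_one: "layered_from k (Suc 0) = insert {Suc k} ` layered_from (Suc k) 0"
proof (rule set_eqI, rule iffI)
  fix P assume P: "P \<in> layered_from k (Suc 0)"
  then have "{Suc k} \<in> P" using first_block by fastforce
  then have "P - {{Suc k}} \<in> layered_from (Suc k) 0" "P = insert {Suc k} (P - {{Suc k}})"
    using remove_singleton_block[OF P] by auto
  then show "P \<in> insert {Suc k} ` layered_from (Suc k) 0" by blast
qed (use insert_singleton_block in auto)

lemma layered_from_Suc_Suc:
  "layered_from k (Suc (Suc n)) = insert {Suc k} ` layered_from (Suc k) (Suc n) \<union>
     insert {Suc k, Suc (Suc k)} ` layered_from (Suc (Suc k)) n"
proof (rule set_eqI, rule iffI)
  fix P assume P: "P \<in> layered_from k (Suc (Suc n))"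
  from first_block[OF P] show "P \<in> insert {Suc k} ` layered_from (Suc k) (Suc n) \<union>
     insert {Suc k, Suc (Suc k)} ` layered_from (Suc (Suc k)) n"
  proof
    assume "{Suc k} \<in> P"
    then have "P - {{Suc k}} \<in> layered_from (Suc k) (Suc n)" "P = insert {Suc k} (P - {{Suc k}})"
      using remove_singleton_block[OF P] by auto
    then show ?thesis by blast
  next
    assume "1 \<le> Suc n \<and> {Suc k, Suc (Suc k)} \<in> P"
    then have "P - {{Suc k, Suc (Suc k)}} \<in> layered_from (Suc (Suc k)) n"
       "P = insert {Suc k, Suc (Suc k)} (P - {{Suc k, Suc (Suc k)}})"
      using remove_pair_block[OF P] by auto
    then show ?thesis by blast
  qed
qed (use insert_singleton_block insert_pair_block in auto)

lemma weight_insert_singleton: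
  assumes P: "P \<in> layered_from (Suc k) n"
  shows "weight (insert {Suc k} P) x y q = x * weight P (x*q) (y*q) q"
proof -
  have nin: "{Suc k} \<notin> P" using layered_from_elem_gt[OF P] by blast
  have fin: "finite P" using finite_matching_blocks[OF P] .
  have "{B \<in> insert {Suc k} P. card B = 1} = insert {Suc k} {B\<in>P. card B = 1}" by auto
  then have s: "singles (insert {Suc k} P) = Suc (singles P)"
    unfolding singles_def using nin fin by simp
  have "{B \<in> insert {Suc k} P. card B = 2} = {B\<in>P. card B = 2}" by auto
  then have d: "doubles (insert {Suc k} P) = doubles P" unfolding doubles_def by simp
  have r: "rb (insert {Suc k} P) = rb P + card P"
    using rb_insert_lowest_block[of P "{Suc k}"] fin layered_from_block[OF P] by fastforce
  show ?thesis unfolding weight_def s d r card_eq_singles_plus_doubles[OF P]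
    by (simp add: power_add algebra_simps)
qed

lemma weight_insert_pair:
  assumes P: "P \<in> layered_from (Suc (Suc k)) n"
  shows "weight (insert {Suc k, Suc (Suc k)} P) x y q = y * weight P (x*q^2) (y*q^2) q"
proof -
  have nin: "{Suc k, Suc (Suc k)} \<notin> P" using layered_from_elem_gt[OF P] by blast
  have fin: "finite P" using finite_matching_blocks[OF P] .
  have "{B \<in> insert {Suc k, Suc (Suc k)} P. card B = 1} = {B\<in>P. card B = 1}" by auto
  then have s: "singles (insert {Suc k, Suc (Suc k)} P) = singles P" unfolding singles_def by simp
  have "{B \<in> insert {Suc k, Suc (Suc k)} P. card B = 2}
      = insert {Suc k, Suc (Suc k)} {B\<in>P. card B = 2}" by auto
  then have d: "doubles (insert {Suc k, Suc (Suc k)} P) = Suc (doubles P)"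
    unfolding doubles_def using nin fin by simp
  have r: "rb (insert {Suc k, Suc (Suc k)} P) = rb P + 2 * card P"
    using rb_insert_lowest_block[of P "{Suc k, Suc (Suc k)}"] fin layered_from_block[OF P]
    by fastforce
  have e: "q ^ (rb P + 2 * (singles P + doubles P)) = q^rb P * (q^2)^singles P * (q^2)^doubles P"
    by (simp add: power_add power_mult)
  show ?thesis unfolding weight_def s d r card_eq_singles_plus_doubles[OF P] e
    by (simp add: algebra_simps)
qed

lemma sum_insert_singleton:
  "(\<Sum>P\<in>insert {Suc k} ` layered_from (Suc k) n. weight P x y q) = x * F_from (Suc k) n (x*q) (y*q) q"
proof -
  have "inj_on (insert {Suc k}) (layered_from (Suc k) n)"
    by (rule inj_on_insert_fresh) (use layered_from_elem_gt in blast)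
  then show ?thesis
    by (simp add: sum.reindex F_from_def sum_distrib_left weight_insert_singleton)
qed

lemma sum_insert_pair:
  "(\<Sum>P\<in>insert {Suc k, Suc (Suc k)} ` layered_from (Suc (Suc k)) n. weight P x y q)
     = y * F_from (Suc (Suc k)) n (x*q^2) (y*q^2) q"
proof -
  have "inj_on (insert {Suc k, Suc (Suc k)}) (layered_from (Suc (Suc k)) n)"
    by (rule inj_on_insert_fresh) (use layered_from_elem_gt in blast)
  then show ?thesis
    by (simp add: sum.reindex F_from_def sum_distrib_left weight_insert_pair)
qed

lemma F_from_0: "F_from k 0 x y q = 1"
  unfolding F_from_def layered_from_empty weight_def singles_def doubles_def rb_def by simp

lemma F_from_1: "F_from k (Suc 0) x y q = x"
proof -
  have "F_from k (Suc 0) x y q = (\<Sum>P\<in>insert {Suc k} ` layered_from (Suc k) 0. weight P x y q)"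
    by (simp only: F_from_def layered_from_one)
  also have "\<dots> = x * F_from (Suc k) 0 (x*q) (y*q) q" by (rule sum_insert_singleton)
  finally show ?thesis by (simp add: F_from_0)
qed

lemma F_from_Suc_Suc:
  "F_from k (Suc (Suc n)) x y q
     = x * F_from (Suc k) (Suc n) (x*q) (y*q) q + y * F_from (Suc (Suc k)) n (x*q^2) (y*q^2) q"
proof -
  let ?A = "insert {Suc k} ` layered_from (Suc k) (Suc n)"
  let ?B = "insert {Suc k, Suc (Suc k)} ` layered_from (Suc (Suc k)) n"
  have "{Suc k} \<notin> insert {Suc k, Suc (Suc k)} Q" if "Q \<in> layered_from (Suc (Suc k)) n" for Q
    using layered_from_elem_gt[OF that, of "{Suc k}" "Suc k"] by auto
  then have disj: "?A \<inter> ?B = {}" by blast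
  have "F_from k (Suc (Suc n)) x y q = (\<Sum>P\<in>?A. weight P x y q) + (\<Sum>P\<in>?B. weight P x y q)"
    unfolding F_from_def layered_from_Suc_Suc
    by (rule sum.union_disjoint[OF finite_imageI[OF finite_layered_from]
          finite_imageI[OF finite_layered_from] disj])
  then show ?thesis by (simp only: sum_insert_singleton sum_insert_pair)
qed

lemma F_from_eq_Fr: "F_from k n x y q = Fr n x y q"
proof (induction n x y q arbitrary: k rule: Fr.induct)
  case (3 n x y q)
  then show ?case by (simp add: F_from_Suc_Suc)
qed (simp_all add: F_from_0 F_from_1)

theorem theorem4p5:
  fixes x y q :: "'a::comm_ring_1" and n :: nat
  shows "F n x y q * F (n + 1) x y q =
    (\<Sum>j = 0..n. x * y ^ j * q ^ (j ^ 2 div 2)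
        * F (n - j) (x * q ^ j) (y * q ^ j) q
        * F (n - j) (x * q ^ (j + 1)) (y * q ^ (j + 1)) q)"
  using Fr_product_identity[of n x y q]
  unfolding F_eq_F_from F_from_eq_Fr summand_def .

end
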